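(* Let $\gamma>0$ with $\gamma\neq1$, $\nu=l+n/2-1$ with $l\ge0$ an integer and $n\ge2$, and $F_\nu(\lambda)=\gamma J_\nu(\lambda)J_\nu'(\gamma\lambda)-J_\nu(\gamma\lambda)J_\nu'(\lambda)$. Then every zero $\lambda_0\neq0$ of $F_\nu$ has multiplicity one or three. The multiplicity is three if and only if $J_\nu(\lambda_0)=J_\nu(\gamma\lambda_0)=0$, and in that case $\lambda_0$ is real.
   Context: $J_\nu$ denotes the Bessel function of the first kind of order $\nu$. *)

theory Defs
  imports "HOL-Analysis.Analysis"
begin

text \<open>Branch of z powr nu that agrees with the principal branch at the base point c
  and is holomorphic in a neighbourhood of c (cut along the ray opposite to c).\<close>
definition cpow_br :: "complex \<Rightarrow> real \<Rightarrow> complex \<Rightarrow> complex" where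
  "cpow_br c \<nu> z = exp (complex_of_real \<nu> * (Ln c + Ln (z / c)))"

definition bessel_J_br :: "complex \<Rightarrow> real \<Rightarrow> complex \<Rightarrow> complex" where
  "bessel_J_br c \<nu> z =
     cpow_br c \<nu> z / complex_of_real (2 powr \<nu>) *
     (\<Sum>k. (-1) ^ k * (z / 2) ^ (2 * k) /
            (fact k * complex_of_real (Gamma (\<nu> + real k + 1))))"

text \<open>Principal-branch value of J_nu.\<close>
definition bessel_J :: "real \<Rightarrow> complex \<Rightarrow> complex" where
  "bessel_J \<nu> z = bessel_J_br z \<nu> z"

definition F_br :: "complex \<Rightarrow> real \<Rightarrow> real \<Rightarrow> complex \<Rightarrow> complex" where
  "F_br c \<gamma> \<nu> w =
     complex_of_real \<gamma> * bessel_J_br c \<nu> w *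
       deriv (bessel_J_br (of_real \<gamma> * c) \<nu>) (of_real \<gamma> * w)
     - bessel_J_br (of_real \<gamma> * c) \<nu> (of_real \<gamma> * w) * deriv (bessel_J_br c \<nu>) w"

definition zero_mult :: "(complex \<Rightarrow> complex) \<Rightarrow> complex \<Rightarrow> nat \<Rightarrow> bool" where
  "zero_mult f z0 m \<longleftrightarrow> (\<forall>k<m. (deriv ^^ k) f z0 = 0) \<and> (deriv ^^ m) f z0 \<noteq> 0"

end

theory Submission
  imports Defs "HOL-Complex_Analysis.Cauchy_Integral_Formula"
begin

(*
  With A(w) = J_nu(w) and B(w) = J_nu(gamma w), Bessel's equation for A and B gives
  F' = (1 - gamma^2) A B - F / w.  At a zero w0 of F this makes F'(w0) = (1 - gamma^2) A(w0) B(w0),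
  so the zero is simple unless A or B vanishes there.  Since F(w0) = gamma A B' - B A' = 0 and
  the zeros of J_nu are simple, A and B then vanish together, and the same relation gives
  F''(w0) = 0 and F'''(w0) = 2 gamma (1 - gamma^2) A'(w0) B'(gamma w0) <> 0.
  The zeros of J_nu (for 2 nu a natural number) are real and simple by Lommel's integral
  identities, integrated along a ray from the origin.
*)

lemma higher_deriv_at_zero_of_deriv_eq:
  fixes f h :: "complex \<Rightarrow> complex"
  assumes S: "open S" "0 \<notin> S" and h: "h holomorphic_on S"
    and f': "\<And>w. w \<in> S \<Longrightarrow> (f has_field_derivative h w - f w / w) (at w)"
    and z: "z \<in> S" and "f z = 0"
  shows "deriv f z = h z"
    and "h z = 0 \<Longrightarrow> deriv (deriv f) z = deriv h z"
    and "h z = 0 \<Longrightarrow> deriv h z = 0 \<Longrightarrow> deriv (deriv (deriv f)) z = deriv (deriv h) z"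
proof -
  have nz: "w \<noteq> 0" if "w \<in> S" for w
    using that S by auto
  have d1: "deriv f w = h w - f w / w" if "w \<in> S" for w
    by (rule DERIV_imp_deriv[OF f'[OF that]])
  have h': "(h has_field_derivative deriv h w) (at w)"
    and h'': "(deriv h has_field_derivative deriv (deriv h) w) (at w)" if "w \<in> S" for w
    using holomorphic_derivI[OF h S(1) that] holomorphic_derivI[OF holomorphic_deriv[OF h S(1)] S(1) that]
    by simp_all
  define f2 where "f2 w = deriv h w - deriv f w / w + f w / w\<^sup>2" for w
  have f2: "(deriv f has_field_derivative f2 w) (at w)" if "w \<in> S" for w
  proof (rule has_field_derivative_transform_within_open[OF _ S(1) that])
    show "((\<lambda>w. h w - f w / w) has_field_derivative f2 w) (at w)"
      using h'[OF that] f'[OF that] nz[OF that]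
      by (auto intro!: derivative_eq_intros simp: f2_def d1[OF that] field_simps power2_eq_square)
  qed (simp add: d1)
  have d2: "deriv (deriv f) w = f2 w" if "w \<in> S" for w
    by (rule DERIV_imp_deriv[OF f2[OF that]])
  show "deriv f z = h z"
    using d1[OF z] \<open>f z = 0\<close> by simp
  then show "h z = 0 \<Longrightarrow> deriv (deriv f) z = deriv h z"
    using d2[OF z] \<open>f z = 0\<close> by (simp add: f2_def)
  assume "h z = 0" "deriv h z = 0"
  have "(deriv (deriv f) has_field_derivative deriv (deriv h) z) (at z)"
  proof (rule has_field_derivative_transform_within_open[OF _ S(1) z])
    have "deriv f z = 0" "f2 z = 0"
      using d1[OF z] \<open>f z = 0\<close> \<open>h z = 0\<close> \<open>deriv h z = 0\<close> by (simp_all add: f2_def)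
    then show "(f2 has_field_derivative deriv (deriv h) z) (at z)"
      unfolding f2_def[abs_def] using h''[OF z] f2[OF z] f'[OF z] nz[OF z] \<open>f z = 0\<close> \<open>h z = 0\<close>
      by (auto intro!: derivative_eq_intros simp: f2_def)
  qed (simp add: d2)
  then show "deriv (deriv (deriv f)) z = deriv (deriv h) z"
    by (rule DERIV_imp_deriv)
qed

lemma deriv_mult_at_common_zero:
  fixes p q :: "complex \<Rightarrow> complex"
  assumes "p holomorphic_on S" "q holomorphic_on S" "open S" "z \<in> S" "p z = 0" "q z = 0"
  shows "deriv (\<lambda>w. p w * q w) z = 0"
    and "deriv (deriv (\<lambda>w. p w * q w)) z = 2 * deriv p z * deriv q z"
  using higher_deriv_mult[OF assms(1-4), of 1] higher_deriv_mult[OF assms(1-4), of 2] assms(5,6)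
  by (simp_all add: numeral_2_eq_2)

lemma zero_mult_1_iff: "zero_mult f z 1 \<longleftrightarrow> f z = 0 \<and> deriv f z \<noteq> 0"
  by (simp add: zero_mult_def)

lemma zero_mult_3_iff:
  "zero_mult f z 3 \<longleftrightarrow> f z = 0 \<and> deriv f z = 0 \<and> deriv (deriv f) z = 0 \<and> deriv (deriv (deriv f)) z \<noteq> 0"
proof -
  have "(\<forall>k<3. P k) \<longleftrightarrow> P 0 \<and> P 1 \<and> P 2" for P :: "nat \<Rightarrow> bool"
    by (auto simp: numeral_3_eq_3 numeral_2_eq_2 less_Suc_eq)
  then show ?thesis
    by (simp add: zero_mult_def numeral_3_eq_3 numeral_2_eq_2)
qed

lemma has_real_derivative_linear_of_real:
  fixes f :: "complex \<Rightarrow> complex" and L :: "complex \<Rightarrow> real"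
  assumes "bounded_linear L" and "(f has_field_derivative D) (at (of_real t))"
  shows "((\<lambda>t. L (f (of_real t))) has_real_derivative L D) (at t)"
  using bounded_linear.has_vector_derivative[OF assms(1) has_vector_derivative_real_field[OF assms(2)]]
  by (simp add: has_real_derivative_iff_has_vector_derivative)

text \<open>Near \<open>0\<close> the derivative is strictly signed, elsewhere on \<open>[0, b]\<close> it has the same weak sign.\<close>
lemma neq_of_deriv_weighted_norm_square:
  fixes v :: "real \<Rightarrow> real" and G :: "real \<Rightarrow> complex"
  assumes "b > 0" and "K \<noteq> 0" and v': "\<And>t. (v has_real_derivative K * t ^ m * (cmod (G t))\<^sup>2) (at t)"
    and "G 0 \<noteq> 0" and "isCont G 0"
  shows "v b \<noteq> v 0"
proof
  assume vb: "v b = v 0"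
  obtain d where "d > 0" and d: "\<And>t. t \<noteq> 0 \<Longrightarrow> \<bar>t\<bar> < d \<Longrightarrow> cmod (G t - G 0) < cmod (G 0)"
    using LIM_D[OF \<open>isCont G 0\<close>[unfolded isCont_def], of "cmod (G 0)"] \<open>G 0 \<noteq> 0\<close> by auto
  define a where "a = min (d/2) (b/2)"
  have a: "0 < a" "a < d" "a < b" using \<open>d > 0\<close> \<open>b > 0\<close> by (auto simp: a_def)
  define h where "h t = K * v t" for t
  define w where "w t = K\<^sup>2 * (t ^ m * (cmod (G t))\<^sup>2)" for t
  have h': "(h has_real_derivative w t) (at t)" for t
    unfolding h_def[abs_def] w_def using DERIV_cmult[OF v', of K t] by (simp add: power2_eq_square algebra_simps)
  obtain x where x: "0 < x" "x < a" and hx: "h a - h 0 = (a - 0) * w x"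
    using MVT2[OF a(1), of h w] h' by blast
  have "G x \<noteq> 0" using d[of x] x a by auto
  then have "h a - h 0 > 0" using hx x a \<open>K \<noteq> 0\<close> by (simp add: w_def)
  moreover obtain y where y: "a < y" "y < b" and hy: "h b - h a = (b - a) * w y"
    using MVT2[OF a(3), of h w] h' by blast
  then have "h b - h a \<ge> 0" using a y by (simp add: w_def)
  moreover have "h b = h 0" using vb by (simp add: h_def)
  ultimately show False by linarith
qed

lemma Re_divide_pos_of_mem_ball:
  assumes "z \<in> ball c (cmod c)"
  shows "Re (z / c) > 0"
proof -
  have "c \<noteq> 0" using assms by auto
  then have "cmod (z / c - 1) = cmod (z - c) / cmod c"
    by (simp add: norm_divide[symmetric] diff_divide_distrib)
  also have "\<dots> < 1"
    using assms \<open>c \<noteq> 0\<close> by (simp add: dist_norm norm_minus_commute)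
  finally show ?thesis
    using abs_Re_le_cmod[of "z / c - 1"] by simp
qed

lemma nonzero_of_mem_ball_norm: "z \<in> ball c (cmod c) \<Longrightarrow> z \<noteq> 0"
  by (auto simp: dist_norm)

lemma of_real_mult_mem_ball_norm:
  assumes "\<gamma> > 0" "w \<in> ball c (cmod c)"
  shows "of_real \<gamma> * w \<in> ball (of_real \<gamma> * c) (cmod (of_real \<gamma> * c))"
  using assms by (simp add: dist_mult_left norm_mult)

definition bessel_coeff :: "real \<Rightarrow> nat \<Rightarrow> real" where
  "bessel_coeff \<nu> k = (-1) ^ k / (4 ^ k * fact k * Gamma (\<nu> + real k + 1))"

text \<open>\<open>bessel_pseries \<nu> j\<close> is the \<open>j\<close>-th derivative of the entire function \<open>G(u) = \<Sum>\<^sub>k bessel_coeff \<nu> k u\<^sup>k\<close>,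
  for which \<open>J\<^sub>\<nu>(z) = (z/2)\<^sup>\<nu> G(z\<^sup>2)\<close>.\<close>
definition bessel_pseries :: "real \<Rightarrow> nat \<Rightarrow> complex \<Rightarrow> complex" where
  "bessel_pseries \<nu> j u = (\<Sum>k. (diffs ^^ j) (\<lambda>k. of_real (bessel_coeff \<nu> k)) k * u ^ k)"

context
  fixes \<nu> :: real
  assumes \<nu>_nonneg: "\<nu> \<ge> 0"
begin

lemma Gamma_shift_pos: "Gamma (\<nu> + real k + 1) > 0"
  using \<nu>_nonneg by (intro Gamma_real_pos) auto

lemma bessel_coeff_Suc:
  "bessel_coeff \<nu> (Suc k) = - bessel_coeff \<nu> k / (4 * (real k + 1) * (\<nu> + real k + 1))"
proof -
  have "\<nu> + real k + 1 \<notin> \<int>\<^sub>\<le>\<^sub>0"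
    using \<nu>_nonneg nonpos_Ints_nonpos[of "\<nu> + real k + 1"] by linarith
  from Gamma_plus1[OF this]
  have "Gamma (\<nu> + real (Suc k) + 1) = (\<nu> + real k + 1) * Gamma (\<nu> + real k + 1)"
    by (simp add: add_ac)
  then show ?thesis
    using Gamma_shift_pos[of k] by (simp add: bessel_coeff_def field_simps)
qed

lemma summable_bessel_coeff:
  "summable (\<lambda>k. of_real (bessel_coeff \<nu> k) * (u :: 'a :: {real_normed_field,banach}) ^ k)"
proof (rule summable_ratio_test[of "1/2" "nat \<lceil>norm u\<rceil>"])
  fix k assume "k \<ge> nat \<lceil>norm u\<rceil>"
  then have "norm u \<le> real k" by linarith
  moreover have "1 \<le> \<nu> + real k + 1" using \<nu>_nonneg by simp
  ultimately have "2 * norm u \<le> 4 * (real k + 1) * (\<nu> + real k + 1)"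
    using mult_mono[of "2 * norm u" "4 * (real k + 1)" 1 "\<nu> + real k + 1"] by simp
  moreover have pos: "4 * (real k + 1) * (\<nu> + real k + 1) > 0"
    using \<nu>_nonneg by simp
  ultimately have ratio: "norm u / (4 * (real k + 1) * (\<nu> + real k + 1)) \<le> 1/2"
    by (simp add: pos_divide_le_eq)
  have "norm (of_real (bessel_coeff \<nu> (Suc k)) * u ^ Suc k :: 'a)
      = \<bar>bessel_coeff \<nu> (Suc k)\<bar> * (norm u ^ k * norm u)"
    by (simp add: norm_mult norm_power)
  also have "\<bar>bessel_coeff \<nu> (Suc k)\<bar> = \<bar>bessel_coeff \<nu> k\<bar> / (4 * (real k + 1) * (\<nu> + real k + 1))"
    using pos by (simp add: bessel_coeff_Suc abs_divide)
  also have "\<dots> * (norm u ^ k * norm u)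
      = \<bar>bessel_coeff \<nu> k\<bar> * norm u ^ k * (norm u / (4 * (real k + 1) * (\<nu> + real k + 1)))"
    by simp
  also have "\<dots> \<le> \<bar>bessel_coeff \<nu> k\<bar> * norm u ^ k * (1/2)"
    using ratio by (intro mult_left_mono) auto
  also have "\<dots> = 1/2 * norm (of_real (bessel_coeff \<nu> k) * u ^ k :: 'a)"
    by (simp add: norm_mult norm_power)
  finally show "norm (of_real (bessel_coeff \<nu> (Suc k)) * u ^ Suc k :: 'a)
      \<le> 1/2 * norm (of_real (bessel_coeff \<nu> k) * u ^ k :: 'a)" .
qed simp

lemma summable_bessel_pseries:
  "summable (\<lambda>k. (diffs ^^ j) (\<lambda>k. of_real (bessel_coeff \<nu> k)) k * (u :: complex) ^ k)"
proof (induction j arbitrary: u)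
  case 0
  show ?case using summable_bessel_coeff by simp
next
  case (Suc j)
  then show ?case by (simp add: termdiff_converges_all)
qed

lemma has_field_derivative_bessel_pseries:
  "(bessel_pseries \<nu> j has_field_derivative bessel_pseries \<nu> (Suc j) u) (at u)"
  unfolding bessel_pseries_def[abs_def]
  using termdiffs_strong_converges_everywhere[OF summable_bessel_pseries] by simp

lemma bessel_pseries_ode:
  "4 * u * bessel_pseries \<nu> 2 u + 4 * (of_real \<nu> + 1) * bessel_pseries \<nu> 1 u + bessel_pseries \<nu> 0 u = 0"
proof -
  define a where "a = (\<lambda>k. complex_of_real (bessel_coeff \<nu> k))"
  have sums: "(\<lambda>k. (diffs ^^ j) a k * u ^ k) sums bessel_pseries \<nu> j u" for j
    unfolding a_def bessel_pseries_def using summable_bessel_pseries by (rule summable_sums)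
  have "(\<lambda>k. u * (diffs (diffs a) k * u ^ k)) sums (u * bessel_pseries \<nu> 2 u)"
    using sums_mult[OF sums[of 2]] by (simp add: numeral_2_eq_2)
  then have "(\<lambda>k. of_nat (Suc k) * diffs a (Suc k) * u ^ Suc k) sums (u * bessel_pseries \<nu> 2 u)"
    by (simp add: diffs_def algebra_simps)
  then have s2: "(\<lambda>k. of_nat k * diffs a k * u ^ k) sums (u * bessel_pseries \<nu> 2 u)"
    using sums_Suc_iff[of "\<lambda>k. of_nat k * diffs a k * u ^ k"] by simp
  have "(\<lambda>k. 4 * (of_nat k * diffs a k * u ^ k) + 4 * (of_real \<nu> + 1) * (diffs a k * u ^ k) + a k * u ^ k)
     sums (4 * (u * bessel_pseries \<nu> 2 u) + 4 * (of_real \<nu> + 1) * bessel_pseries \<nu> 1 u + bessel_pseries \<nu> 0 u)"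
    using sums[of 1] sums[of 0] by (intro sums_add sums_mult s2) auto
  moreover have "4 * (of_nat k * diffs a k * u ^ k) + 4 * (of_real \<nu> + 1) * (diffs a k * u ^ k) + a k * u ^ k = 0"
    for k
  proof -
    have "bessel_coeff \<nu> k + 4 * (real k + 1) * (\<nu> + real k + 1) * bessel_coeff \<nu> (Suc k) = 0"
      using \<nu>_nonneg by (simp add: bessel_coeff_Suc)
    then have "complex_of_real (bessel_coeff \<nu> k + 4 * (real k + 1) * (\<nu> + real k + 1) * bessel_coeff \<nu> (Suc k)) = 0"
      by (simp only: of_real_0)
    then have "a k + 4 * (of_nat k + 1) * (of_real \<nu> + of_nat k + 1) * a (Suc k) = 0"
      by (simp add: a_def)
    moreover have "4 * (of_nat k * diffs a k * u ^ k) + 4 * (of_real \<nu> + 1) * (diffs a k * u ^ k) + a k * u ^ k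
        = (a k + 4 * (of_nat k + 1) * (of_real \<nu> + of_nat k + 1) * a (Suc k)) * u ^ k"
      by (simp add: diffs_def algebra_simps)
    ultimately show ?thesis by simp
  qed
  ultimately have "(\<lambda>k. 0) sums
      (4 * (u * bessel_pseries \<nu> 2 u) + 4 * (of_real \<nu> + 1) * bessel_pseries \<nu> 1 u + bessel_pseries \<nu> 0 u)"
    by simp
  from sums_unique2[OF this sums_zero] show ?thesis
    by (simp add: mult.assoc)
qed

end

definition bessel_entire :: "real \<Rightarrow> complex \<Rightarrow> complex" where
  "bessel_entire \<nu> z = bessel_pseries \<nu> 0 (z\<^sup>2)"

definition bessel_entire' :: "real \<Rightarrow> complex \<Rightarrow> complex" where
  "bessel_entire' \<nu> z = 2 * z * bessel_pseries \<nu> 1 (z\<^sup>2)"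

definition bessel_entire'' :: "real \<Rightarrow> complex \<Rightarrow> complex" where
  "bessel_entire'' \<nu> z = 2 * bessel_pseries \<nu> 1 (z\<^sup>2) + 4 * z\<^sup>2 * bessel_pseries \<nu> 2 (z\<^sup>2)"

lemma bessel_entire_minus: "bessel_entire \<nu> (- z) = bessel_entire \<nu> z"
  by (simp add: bessel_entire_def)

lemma bessel_entire'_minus: "bessel_entire' \<nu> (- z) = - bessel_entire' \<nu> z"
  by (simp add: bessel_entire'_def)

lemma has_field_derivative_cpow_br:
  assumes "z \<in> ball c (cmod c)"
  shows "(cpow_br c \<nu> has_field_derivative of_real \<nu> * cpow_br c \<nu> z / z) (at z)"
proof -
  have "c \<noteq> 0" "z \<noteq> 0"
    using assms by (auto simp: dist_norm)
  moreover have "z / c \<notin> \<real>\<^sub>\<le>\<^sub>0"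
    using Re_divide_pos_of_mem_ball[OF assms] by (auto simp: complex_nonpos_Reals_iff)
  ultimately show ?thesis
    unfolding cpow_br_def[abs_def] by (auto intro!: derivative_eq_intros simp: field_simps)
qed

lemma cpow_br_nonzero: "cpow_br c \<nu> z \<noteq> 0"
  by (simp add: cpow_br_def)

lemma bessel_J_br_eq: "bessel_J_br c \<nu> z = cpow_br c \<nu> z / of_real (2 powr \<nu>) * bessel_entire \<nu> z"
proof -
  have "(-1) ^ k * (z / 2) ^ (2 * k) / (fact k * complex_of_real (Gamma (\<nu> + real k + 1)))
      = of_real (bessel_coeff \<nu> k) * (z\<^sup>2) ^ k" for k
    by (simp add: bessel_coeff_def power_mult power_divide)
  then show ?thesis
    by (simp add: bessel_J_br_def bessel_entire_def bessel_pseries_def)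
qed

lemma bessel_J_br_eq_0_iff: "bessel_J_br c \<nu> z = 0 \<longleftrightarrow> bessel_entire \<nu> z = 0"
  by (simp add: bessel_J_br_eq cpow_br_nonzero)

definition bessel_J_br_deriv :: "complex \<Rightarrow> real \<Rightarrow> complex \<Rightarrow> complex" where
  "bessel_J_br_deriv c \<nu> z =
     cpow_br c \<nu> z / of_real (2 powr \<nu>) * (of_real \<nu> * bessel_entire \<nu> z / z + bessel_entire' \<nu> z)"

context
  fixes \<nu> :: real
  assumes \<nu>_nonneg: "\<nu> \<ge> 0"
begin

lemma has_field_derivative_bessel_pseries_chain [derivative_intros]:
  "(f has_field_derivative f') (at z within S) \<Longrightarrow>
    ((\<lambda>z. bessel_pseries \<nu> j (f z)) has_field_derivative bessel_pseries \<nu> (Suc j) (f z) * f') (at z within S)"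
  by (rule DERIV_chain2[OF has_field_derivative_bessel_pseries[OF \<nu>_nonneg]])

lemma has_field_derivative_bessel_entire [derivative_intros]:
  "(f has_field_derivative f') (at z within S) \<Longrightarrow>
    ((\<lambda>z. bessel_entire \<nu> (f z)) has_field_derivative bessel_entire' \<nu> (f z) * f') (at z within S)"
  unfolding bessel_entire_def bessel_entire'_def
  by (auto intro!: derivative_eq_intros simp: algebra_simps)

lemma has_field_derivative_bessel_entire' [derivative_intros]:
  "(f has_field_derivative f') (at z within S) \<Longrightarrow>
    ((\<lambda>z. bessel_entire' \<nu> (f z)) has_field_derivative bessel_entire'' \<nu> (f z) * f') (at z within S)"
  unfolding bessel_entire'_def bessel_entire''_def
  by (auto intro!: derivative_eq_intros simp: algebra_simps numeral_2_eq_2 power2_eq_square)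

lemma bessel_entire_ode:
  "z * bessel_entire'' \<nu> z + (2 * of_real \<nu> + 1) * bessel_entire' \<nu> z + z * bessel_entire \<nu> z = 0"
proof -
  have "z * bessel_entire'' \<nu> z + (2 * of_real \<nu> + 1) * bessel_entire' \<nu> z + z * bessel_entire \<nu> z
    = z * (4 * z\<^sup>2 * bessel_pseries \<nu> 2 (z\<^sup>2) + 4 * (of_real \<nu> + 1) * bessel_pseries \<nu> 1 (z\<^sup>2)
           + bessel_pseries \<nu> 0 (z\<^sup>2))"
    by (simp add: bessel_entire_def bessel_entire'_def bessel_entire''_def algebra_simps)
  then show ?thesis
    using bessel_pseries_ode[OF \<nu>_nonneg, of "z\<^sup>2"] by simp
qed

lemma bessel_entire_cnj: "bessel_entire \<nu> (cnj z) = cnj (bessel_entire \<nu> z)"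
proof -
  have "(\<lambda>k. of_real (bessel_coeff \<nu> k) * (z\<^sup>2) ^ k) sums bessel_entire \<nu> z"
    unfolding bessel_entire_def bessel_pseries_def
    using summable_bessel_pseries[OF \<nu>_nonneg, of 0] by (simp add: summable_sums)
  from sums_cnj[THEN iffD2, OF this] show ?thesis
    unfolding bessel_entire_def bessel_pseries_def by (simp add: sums_iff)
qed

text \<open>On the imaginary axis all terms of the series have the same sign.\<close>
lemma bessel_entire_nonzero_imaginary:
  assumes "Re z = 0"
  shows "bessel_entire \<nu> z \<noteq> 0"
proof -
  define s where "s = (Im z)\<^sup>2"
  have z2: "z\<^sup>2 = of_real (- s)"
    using assms by (simp add: s_def complex_eq_iff power2_eq_square)
  have summ: "summable (\<lambda>k. bessel_coeff \<nu> k * (- s) ^ k)"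
    using summable_bessel_coeff[OF \<nu>_nonneg, of "- s"] by simp
  have "(\<lambda>k. of_real (bessel_coeff \<nu> k * (- s) ^ k) :: complex) sums of_real (\<Sum>k. bessel_coeff \<nu> k * (- s) ^ k)"
    by (rule sums_of_real[OF summable_sums[OF summ]])
  then have val: "bessel_entire \<nu> z = of_real (\<Sum>k. bessel_coeff \<nu> k * (- s) ^ k)"
    unfolding bessel_entire_def bessel_pseries_def z2 by (simp add: sums_iff)
  have "0 \<le> bessel_coeff \<nu> k * (- s) ^ k" for k
  proof -
    have "bessel_coeff \<nu> k * (- s) ^ k = s ^ k / (4 ^ k * fact k * Gamma (\<nu> + real k + 1))"
      by (simp add: bessel_coeff_def power_minus' field_simps)
    then show ?thesis
      using Gamma_shift_pos[OF \<nu>_nonneg, of k] by (simp add: s_def)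
  qed
  moreover have "0 < bessel_coeff \<nu> 0 * (- s) ^ 0"
    using Gamma_shift_pos[OF \<nu>_nonneg, of 0] by (simp add: bessel_coeff_def)
  ultimately have "0 < (\<Sum>k. bessel_coeff \<nu> k * (- s) ^ k)"
    by (rule suminf_pos2[OF summ])
  then show ?thesis using val by simp
qed

lemma has_field_derivative_bessel_J_br:
  assumes "z \<in> ball c (cmod c)"
  shows "(bessel_J_br c \<nu> has_field_derivative bessel_J_br_deriv c \<nu> z) (at z)"
  unfolding bessel_J_br_eq[abs_def] bessel_J_br_deriv_def
  using nonzero_of_mem_ball_norm[OF assms]
  by (auto intro!: derivative_eq_intros has_field_derivative_cpow_br[OF assms] simp: \<nu>_nonneg field_simps)

lemma has_field_derivative_bessel_J_br_deriv:
  assumes "z \<in> ball c (cmod c)"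
  shows "(bessel_J_br_deriv c \<nu> has_field_derivative
           - bessel_J_br_deriv c \<nu> z / z - (1 - (of_real \<nu>)\<^sup>2 / z\<^sup>2) * bessel_J_br c \<nu> z) (at z)"
proof -
  have "z \<noteq> 0" by (rule nonzero_of_mem_ball_norm[OF assms])
  have "z * bessel_entire'' \<nu> z = - ((2 * of_real \<nu> + 1) * bessel_entire' \<nu> z + z * bessel_entire \<nu> z)"
    using bessel_entire_ode[of z] by (subst eq_neg_iff_add_eq_0) (simp add: add.assoc)
  then have ode: "bessel_entire'' \<nu> z = - ((2 * of_real \<nu> + 1) * bessel_entire' \<nu> z + z * bessel_entire \<nu> z) / z"
    using \<open>z \<noteq> 0\<close> by (simp add: nonzero_eq_divide_eq mult.commute)
  show ?thesis
    unfolding bessel_J_br_eq bessel_J_br_deriv_def[abs_def] using \<open>z \<noteq> 0\<close>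
    by (auto intro!: derivative_eq_intros has_field_derivative_cpow_br[OF assms]
        simp: \<nu>_nonneg ode field_simps power2_eq_square)
qed

end

context
  fixes \<nu> :: real and m :: nat
  assumes two_\<nu>: "2 * \<nu> = real m"
begin

lemma half_order_nonneg: "\<nu> \<ge> 0"
  using two_\<nu> by simp

lemma two_\<nu>_complex: "(of_nat m :: complex) = 2 * of_real \<nu>"
  using arg_cong[OF two_\<nu>, of complex_of_real] by simp

lemma lommel_identity:
  "((\<lambda>z. z ^ Suc m * (\<alpha> * bessel_entire' \<nu> (\<alpha> * z) * bessel_entire \<nu> (\<beta> * z)
                         - \<beta> * bessel_entire \<nu> (\<alpha> * z) * bessel_entire' \<nu> (\<beta> * z)))
     has_field_derivative
       (\<beta>\<^sup>2 - \<alpha>\<^sup>2) * z ^ Suc m * bessel_entire \<nu> (\<alpha> * z) * bessel_entire \<nu> (\<beta> * z)) (at z)"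
proof -
  define n where "n = complex_of_real \<nu>"
  define a b c where "a = bessel_entire \<nu> (\<alpha> * z)" "b = bessel_entire' \<nu> (\<alpha> * z)" "c = bessel_entire'' \<nu> (\<alpha> * z)"
  define a' b' c' where "a' = bessel_entire \<nu> (\<beta> * z)" "b' = bessel_entire' \<nu> (\<beta> * z)" "c' = bessel_entire'' \<nu> (\<beta> * z)"
  have ode: "(\<alpha> * z) * c + (2 * n + 1) * b + (\<alpha> * z) * a = 0"
    "(\<beta> * z) * c' + (2 * n + 1) * b' + (\<beta> * z) * a' = 0"
    unfolding n_def a_b_c_def a'_b'_c'_def by (rule bessel_entire_ode[OF half_order_nonneg])+
  have alg: "(p + 2 * n * p) * (\<alpha> * b * a' - \<beta> * a * b') + (c * \<alpha> * \<alpha> * a' - c' * \<beta> * (\<beta> * a)) * (z * p)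
      = (\<beta>\<^sup>2 - \<alpha>\<^sup>2) * (z * p) * a * a'" for p
  proof -
    have "(p + 2 * n * p) * (\<alpha> * b * a' - \<beta> * a * b') + (c * \<alpha> * \<alpha> * a' - c' * \<beta> * (\<beta> * a)) * (z * p)
        - (\<beta>\<^sup>2 - \<alpha>\<^sup>2) * (z * p) * a * a'
      = \<alpha> * p * a' * ((\<alpha> * z) * c + (2 * n + 1) * b + (\<alpha> * z) * a)
        - \<beta> * p * a * ((\<beta> * z) * c' + (2 * n + 1) * b' + (\<beta> * z) * a')"
      by algebra
    then show ?thesis using ode by simp
  qed
  have pow: "(of_nat m :: complex) * z ^ (m - Suc 0) * z = of_nat m * z ^ m"
    by (cases m) auto
  show ?thesis
    apply (auto intro!: derivative_eq_intros simp: half_order_nonneg)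
    apply (simp only: pow)
    apply (simp only: two_\<nu>_complex)
    using alg unfolding n_def a_b_c_def a'_b'_c'_def .
qed

lemma lommel_identity_diagonal:
  "((\<lambda>z. z ^ Suc (Suc m) * ((bessel_entire' \<nu> z)\<^sup>2 + (bessel_entire \<nu> z)\<^sup>2)
         + 2 * of_real \<nu> * z ^ Suc m * bessel_entire \<nu> z * bessel_entire' \<nu> z)
     has_field_derivative 2 * z ^ Suc m * (bessel_entire \<nu> z)\<^sup>2) (at z)"
proof -
  define n where "n = complex_of_real \<nu>"
  define a b c where "a = bessel_entire \<nu> z" "b = bessel_entire' \<nu> z" "c = bessel_entire'' \<nu> z"
  have ode: "z * c + (2 * n + 1) * b + z * a = 0"
    unfolding n_def a_b_c_def by (rule bessel_entire_ode[OF half_order_nonneg])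
  have alg: "(z * p + (p + 2 * n * p) * z) * (b\<^sup>2 + a\<^sup>2) + (2 * (c * b) + 2 * (b * a)) * (z * (z * p))
      + (((p + 2 * n * p) * (2 * n) * a + b * (2 * n * (z * p))) * b
         + c * (2 * n * (z * p) * a))
      = 2 * (z * p) * a\<^sup>2" for p
  proof -
    have "(z * p + (p + 2 * n * p) * z) * (b\<^sup>2 + a\<^sup>2) + (2 * (c * b) + 2 * (b * a)) * (z * (z * p))
        + (((p + 2 * n * p) * (2 * n) * a + b * (2 * n * (z * p))) * b
           + c * (2 * n * (z * p) * a)) - 2 * (z * p) * a\<^sup>2
      = (2 * z * p * b + 2 * n * p * a) * (z * c + (2 * n + 1) * b + z * a)"
      by algebra
    then show ?thesis using ode by simp
  qed
  have pow: "(of_nat m :: complex) * z ^ (m - Suc 0) * z = of_nat m * z ^ m"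
    by (cases m) auto
  show ?thesis
    apply (auto intro!: derivative_eq_intros simp: half_order_nonneg)
    apply (simp only: pow)
    apply (simp only: two_\<nu>_complex)
    using alg unfolding n_def a_b_c_def .
qed

lemma isCont_bessel_entire_ray: "isCont (\<lambda>t. bessel_entire \<nu> (\<alpha> * of_real t)) t"
proof -
  have "isCont (bessel_entire \<nu>) w" for w
    using DERIV_isCont[OF has_field_derivative_bessel_entire[OF half_order_nonneg DERIV_ident]] by simp
  then show ?thesis
    by (rule isCont_o2[rotated]) (intro continuous_intros)
qed

text \<open>Integrate the Lommel identity for \<open>\<alpha>\<close> and \<open>\<beta> = \<alpha>\<^sup>*\<close> along \<open>[0, 1]\<close>: the imaginary part
  of the integrand \<open>(\<beta>\<^sup>2 - \<alpha>\<^sup>2) t\<^sup>m\<^sup>+\<^sup>1 |g(\<alpha>t)|\<^sup>2\<close> has constant sign.\<close>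
lemma bessel_entire_zero_Im_square:
  assumes "bessel_entire \<nu> \<alpha> = 0"
  shows "Im (\<alpha>\<^sup>2) = 0"
proof (rule ccontr)
  assume "Im (\<alpha>\<^sup>2) \<noteq> 0"
  define \<beta> where "\<beta> = cnj \<alpha>"
  define W where "W z = z ^ Suc m * (\<alpha> * bessel_entire' \<nu> (\<alpha> * z) * bessel_entire \<nu> (\<beta> * z)
                                     - \<beta> * bessel_entire \<nu> (\<alpha> * z) * bessel_entire' \<nu> (\<beta> * z))" for z
  define G where "G t = bessel_entire \<nu> (\<alpha> * of_real t)" for t
  have G_cnj: "bessel_entire \<nu> (\<beta> * of_real t) = cnj (G t)" for t
    by (simp add: G_def \<beta>_def bessel_entire_cnj[OF half_order_nonneg, symmetric])
  have deriv: "((\<lambda>t. Im (W (of_real t))) has_real_derivative (- 2 * Im (\<alpha>\<^sup>2)) * t ^ Suc m * (cmod (G t))\<^sup>2) (at t)"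
    for t
  proof -
    have "((\<lambda>t. Im (W (of_real t))) has_real_derivative
        Im ((\<beta>\<^sup>2 - \<alpha>\<^sup>2) * of_real t ^ Suc m * bessel_entire \<nu> (\<alpha> * of_real t) * bessel_entire \<nu> (\<beta> * of_real t)))
        (at t)"
      unfolding W_def by (rule has_real_derivative_linear_of_real[OF bounded_linear_Im lommel_identity])
    moreover have "Im ((\<beta>\<^sup>2 - \<alpha>\<^sup>2) * of_real t ^ Suc m * bessel_entire \<nu> (\<alpha> * of_real t) * bessel_entire \<nu> (\<beta> * of_real t))
        = (- 2 * Im (\<alpha>\<^sup>2)) * t ^ Suc m * (cmod (G t))\<^sup>2"
    proof -
      have "bessel_entire \<nu> (\<alpha> * of_real t) * bessel_entire \<nu> (\<beta> * of_real t) = of_real ((cmod (G t))\<^sup>2)"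
        unfolding G_cnj G_def[symmetric] by (rule complex_norm_square[symmetric])
      then have "Im ((\<beta>\<^sup>2 - \<alpha>\<^sup>2) * of_real t ^ Suc m * bessel_entire \<nu> (\<alpha> * of_real t) * bessel_entire \<nu> (\<beta> * of_real t))
          = Im ((\<beta>\<^sup>2 - \<alpha>\<^sup>2) * of_real (t ^ Suc m * (cmod (G t))\<^sup>2))"
        by (simp only: mult.assoc of_real_mult of_real_power)
      also have "\<dots> = Im (\<beta>\<^sup>2 - \<alpha>\<^sup>2) * (t ^ Suc m * (cmod (G t))\<^sup>2)"
        by simp
      also have "Im (\<beta>\<^sup>2 - \<alpha>\<^sup>2) = - 2 * Im (\<alpha>\<^sup>2)"
        by (simp add: \<beta>_def Im_power2)
      finally show ?thesis by (simp only: mult.assoc)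
    qed
    ultimately show ?thesis by (rule DERIV_cong)
  qed
  have "- 2 * Im (\<alpha>\<^sup>2) \<noteq> 0"
    using \<open>Im (\<alpha>\<^sup>2) \<noteq> 0\<close> by simp
  moreover have "G 0 \<noteq> 0"
    using bessel_entire_nonzero_imaginary[OF half_order_nonneg, of 0] by (simp add: G_def)
  moreover have "isCont G 0"
    unfolding G_def by (rule isCont_bessel_entire_ray)
  ultimately have "Im (W (of_real 1)) \<noteq> Im (W (of_real 0))"
    using neq_of_deriv_weighted_norm_square[OF zero_less_one _ deriv] by blast
  moreover have "Im (W 1) = Im (W 0)"
    using assms by (simp add: W_def \<beta>_def bessel_entire_cnj[OF half_order_nonneg])
  ultimately show False by (metis of_real_0 of_real_1)
qed

lemma bessel_entire_zero_real:
  assumes "bessel_entire \<nu> \<alpha> = 0"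
  shows "\<alpha> \<in> \<real>"
proof -
  have "Re \<alpha> * Im \<alpha> = 0"
    using bessel_entire_zero_Im_square[OF assms] by (auto simp: power2_eq_square)
  moreover have "Re \<alpha> \<noteq> 0"
    using bessel_entire_nonzero_imaginary[OF half_order_nonneg] assms by blast
  ultimately have "Im \<alpha> = 0" by simp
  then show ?thesis by (simp add: complex_is_Real_iff)
qed

text \<open>Integrating the diagonal Lommel identity along \<open>[0, r]\<close> gives \<open>r\<^sup>m\<^sup>+\<^sup>2 g'(r)\<^sup>2 \<noteq> 0\<close> at a real zero \<open>r\<close> of \<open>g\<close>.\<close>
lemma bessel_entire_zero_simple:
  assumes "bessel_entire \<nu> z = 0"
  shows "bessel_entire' \<nu> z \<noteq> 0"
proof
  assume "bessel_entire' \<nu> z = 0"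
  define E where "E t = Re (of_real t ^ Suc (Suc m) * ((bessel_entire' \<nu> (of_real t))\<^sup>2 + (bessel_entire \<nu> (of_real t))\<^sup>2)
      + 2 * of_real \<nu> * of_real t ^ Suc m * bessel_entire \<nu> (of_real t) * bessel_entire' \<nu> (of_real t))" for t
  define G where "G t = bessel_entire \<nu> (of_real t)" for t
  obtain r where z: "z = of_real r"
    using bessel_entire_zero_real[OF assms] by (auto elim: Reals_cases)
  have deriv: "(E has_real_derivative 2 * t ^ Suc m * (cmod (G t))\<^sup>2) (at t)" for t
  proof -
    have "(E has_real_derivative Re (2 * of_real t ^ Suc m * (G t)\<^sup>2)) (at t)"
      unfolding E_def G_def
      by (rule has_real_derivative_linear_of_real[OF bounded_linear_Re lommel_identity_diagonal])
    moreover have "G t \<in> \<real>"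
      using bessel_entire_cnj[OF half_order_nonneg, of "of_real t"] by (simp add: G_def Reals_cnj_iff)
    then have "Re (2 * of_real t ^ Suc m * (G t)\<^sup>2) = 2 * t ^ Suc m * (cmod (G t))\<^sup>2"
      by (auto elim!: Reals_cases simp: power2_eq_square)
    ultimately show ?thesis by (rule DERIV_cong)
  qed
  have "G 0 \<noteq> 0"
    using bessel_entire_nonzero_imaginary[OF half_order_nonneg, of 0] by (simp add: G_def)
  moreover have "isCont G 0"
    using isCont_bessel_entire_ray[where \<alpha> = 1] by (simp add: G_def[abs_def])
  ultimately have E_neq: "E s \<noteq> E 0" if "s > 0" for s
    using neq_of_deriv_weighted_norm_square[OF that _ deriv] by simp
  have "E r = E 0" and "E (- r) = E 0"
    using assms \<open>bessel_entire' \<nu> z = 0\<close>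
    by (simp_all add: E_def z bessel_entire_minus bessel_entire'_minus)
  moreover have "r \<noteq> 0"
    using assms bessel_entire_nonzero_imaginary[OF half_order_nonneg, of 0] z by auto
  then consider "r > 0" | "- r > 0" by linarith
  ultimately show False
    using E_neq by metis
qed

lemma bessel_J_br_deriv_nonzero:
  assumes "z \<noteq> 0" "bessel_J_br c \<nu> z = 0"
  shows "bessel_J_br_deriv c \<nu> z \<noteq> 0"
proof -
  have "bessel_entire \<nu> z = 0"
    using assms(2) by (simp add: bessel_J_br_eq_0_iff)
  then show ?thesis
    using bessel_entire_zero_simple by (simp add: bessel_J_br_deriv_def cpow_br_nonzero)
qed

lemma bessel_J_zero_real: "bessel_J \<nu> z = 0 \<Longrightarrow> z \<in> \<real>"
  by (simp add: bessel_J_def bessel_J_br_eq_0_iff bessel_entire_zero_real)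

end

lemma has_field_derivative_bessel_cross:
  fixes A A' B B' :: "complex \<Rightarrow> complex" and \<gamma> \<nu> w :: complex
  assumes "w \<noteq> 0" "\<gamma> \<noteq> 0"
    and A: "(A has_field_derivative A' w) (at w)"
      "(A' has_field_derivative - A' w / w - (1 - \<nu>\<^sup>2 / w\<^sup>2) * A w) (at w)"
    and B: "(B has_field_derivative B' (\<gamma> * w)) (at (\<gamma> * w))"
      "(B' has_field_derivative - B' (\<gamma> * w) / (\<gamma> * w) - (1 - \<nu>\<^sup>2 / (\<gamma> * w)\<^sup>2) * B (\<gamma> * w)) (at (\<gamma> * w))"
  shows "((\<lambda>w. \<gamma> * A w * B' (\<gamma> * w) - B (\<gamma> * w) * A' w) has_field_derivative
           (1 - \<gamma>\<^sup>2) * A w * B (\<gamma> * w) - (\<gamma> * A w * B' (\<gamma> * w) - B (\<gamma> * w) * A' w) / w) (at w)"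
proof -
  have "((\<lambda>w. B (\<gamma> * w)) has_field_derivative B' (\<gamma> * w) * \<gamma>) (at w)"
    and "((\<lambda>w. B' (\<gamma> * w)) has_field_derivative
          (- B' (\<gamma> * w) / (\<gamma> * w) - (1 - \<nu>\<^sup>2 / (\<gamma> * w)\<^sup>2) * B (\<gamma> * w)) * \<gamma>) (at w)"
    using DERIV_chain2[OF B(1) DERIV_cmult_Id] DERIV_chain2[OF B(2) DERIV_cmult_Id] by simp_all
  then show ?thesis
    using assms(1,2) A by (auto intro!: derivative_eq_intros simp: field_simps power2_eq_square)
qed

context
  fixes \<nu> \<gamma> :: real and c :: complex
  assumes \<nu>_nonneg: "\<nu> \<ge> 0" and \<gamma>_pos: "\<gamma> > 0"
begin

lemma F_br_eq:
  assumes "w \<in> ball c (cmod c)"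
  shows "F_br c \<gamma> \<nu> w = of_real \<gamma> * bessel_J_br c \<nu> w * bessel_J_br_deriv (of_real \<gamma> * c) \<nu> (of_real \<gamma> * w)
    - bessel_J_br (of_real \<gamma> * c) \<nu> (of_real \<gamma> * w) * bessel_J_br_deriv c \<nu> w"
  using DERIV_imp_deriv[OF has_field_derivative_bessel_J_br[OF \<nu>_nonneg assms]]
    DERIV_imp_deriv[OF has_field_derivative_bessel_J_br[OF \<nu>_nonneg of_real_mult_mem_ball_norm[OF \<gamma>_pos assms]]]
  by (simp add: F_br_def)

lemma has_field_derivative_F_br:
  assumes "w \<in> ball c (cmod c)"
  shows "(F_br c \<gamma> \<nu> has_field_derivative
           (1 - (of_real \<gamma>)\<^sup>2) * bessel_J_br c \<nu> w * bessel_J_br (of_real \<gamma> * c) \<nu> (of_real \<gamma> * w)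
           - F_br c \<gamma> \<nu> w / w) (at w)"
proof (rule has_field_derivative_transform_within_open[OF _ open_ball assms])
  note \<gamma>w = of_real_mult_mem_ball_norm[OF \<gamma>_pos assms]
  show "((\<lambda>w. of_real \<gamma> * bessel_J_br c \<nu> w * bessel_J_br_deriv (of_real \<gamma> * c) \<nu> (of_real \<gamma> * w)
        - bessel_J_br (of_real \<gamma> * c) \<nu> (of_real \<gamma> * w) * bessel_J_br_deriv c \<nu> w)
      has_field_derivative
        (1 - (of_real \<gamma>)\<^sup>2) * bessel_J_br c \<nu> w * bessel_J_br (of_real \<gamma> * c) \<nu> (of_real \<gamma> * w)
        - F_br c \<gamma> \<nu> w / w) (at w)"
    unfolding F_br_eq[OF assms]
    by (rule has_field_derivative_bessel_cross[OF nonzero_of_mem_ball_norm[OF assms]])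
      (use \<gamma>_pos has_field_derivative_bessel_J_br[OF \<nu>_nonneg] has_field_derivative_bessel_J_br_deriv[OF \<nu>_nonneg]
         assms \<gamma>w in auto)
qed (simp add: F_br_eq)

end

lemma F_br_higher_derivs:
  fixes \<nu> \<gamma> :: real and z0 :: complex
  assumes "\<nu> \<ge> 0" "\<gamma> > 0" "z0 \<noteq> 0" and F0: "F_br z0 \<gamma> \<nu> z0 = 0"
  defines "p \<equiv> \<lambda>w. (1 - (of_real \<gamma>)\<^sup>2) * bessel_J_br z0 \<nu> w"
    and "q \<equiv> \<lambda>w. bessel_J_br (of_real \<gamma> * z0) \<nu> (of_real \<gamma> * w)"
  shows "deriv (F_br z0 \<gamma> \<nu>) z0 = p z0 * q z0"
    and "p z0 = 0 \<Longrightarrow> q z0 = 0 \<Longrightarrow> deriv (deriv (F_br z0 \<gamma> \<nu>)) z0 = 0"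
    and "p z0 = 0 \<Longrightarrow> q z0 = 0 \<Longrightarrow> deriv (deriv (deriv (F_br z0 \<gamma> \<nu>))) z0
           = 2 * (1 - (of_real \<gamma>)\<^sup>2) * bessel_J_br_deriv z0 \<nu> z0
               * (bessel_J_br_deriv (of_real \<gamma> * z0) \<nu> (of_real \<gamma> * z0) * of_real \<gamma>)"
proof -
  define S where "S = ball z0 (cmod z0)"
  have S: "open S" "0 \<notin> S" "z0 \<in> S"
    using \<open>z0 \<noteq> 0\<close> by (auto simp: S_def)
  have p': "(p has_field_derivative (1 - (of_real \<gamma>)\<^sup>2) * bessel_J_br_deriv z0 \<nu> w) (at w)" if "w \<in> S" for w
    unfolding p_def using has_field_derivative_bessel_J_br[OF assms(1) that[unfolded S_def]]
    by (auto intro!: derivative_eq_intros)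
  have q': "(q has_field_derivative bessel_J_br_deriv (of_real \<gamma> * z0) \<nu> (of_real \<gamma> * w) * of_real \<gamma>) (at w)"
    if "w \<in> S" for w
    unfolding q_def
    using DERIV_chain2[OF has_field_derivative_bessel_J_br[OF assms(1) of_real_mult_mem_ball_norm[OF \<open>\<gamma> > 0\<close>]]
        DERIV_cmult_Id] that by (simp add: S_def)
  have hol: "p holomorphic_on S" "q holomorphic_on S"
    using p' q' S(1) by (auto simp: holomorphic_on_open)
  have F': "(F_br z0 \<gamma> \<nu> has_field_derivative p w * q w - F_br z0 \<gamma> \<nu> w / w) (at w)" if "w \<in> S" for w
    using has_field_derivative_F_br[OF assms(1,2), of w z0] that by (simp add: S_def p_def q_def mult.assoc)
  note F_derivs = higher_deriv_at_zero_of_deriv_eq[OF S(1,2) holomorphic_on_mult[OF hol] F' S(3) F0]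
  show "deriv (F_br z0 \<gamma> \<nu>) z0 = p z0 * q z0"
    by (rule F_derivs(1))
  assume "p z0 = 0" "q z0 = 0"
  note pq_derivs = deriv_mult_at_common_zero[OF hol S(1,3) this]
  show "deriv (deriv (F_br z0 \<gamma> \<nu>)) z0 = 0"
    using F_derivs(2) pq_derivs(1) \<open>p z0 = 0\<close> \<open>q z0 = 0\<close> by simp
  show "deriv (deriv (deriv (F_br z0 \<gamma> \<nu>))) z0
      = 2 * (1 - (of_real \<gamma>)\<^sup>2) * bessel_J_br_deriv z0 \<nu> z0
          * (bessel_J_br_deriv (of_real \<gamma> * z0) \<nu> (of_real \<gamma> * z0) * of_real \<gamma>)"
    using F_derivs(3) pq_derivs \<open>p z0 = 0\<close> \<open>q z0 = 0\<close> DERIV_imp_deriv[OF p'[OF S(3)]] DERIV_imp_deriv[OF q'[OF S(3)]]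
    by (simp add: mult.assoc)
qed

lemma zero_mult_F_br:
  fixes \<nu> \<gamma> :: real and m :: nat and z0 :: complex
  assumes two_\<nu>: "2 * \<nu> = real m" and "\<gamma> > 0" "\<gamma> \<noteq> 1" "z0 \<noteq> 0" and F0: "F_br z0 \<gamma> \<nu> z0 = 0"
  shows "(zero_mult (F_br z0 \<gamma> \<nu>) z0 1 \<or> zero_mult (F_br z0 \<gamma> \<nu>) z0 3)
       \<and> (zero_mult (F_br z0 \<gamma> \<nu>) z0 3 \<longleftrightarrow> bessel_J \<nu> z0 = 0 \<and> bessel_J \<nu> (of_real \<gamma> * z0) = 0)
       \<and> (zero_mult (F_br z0 \<gamma> \<nu>) z0 3 \<longrightarrow> z0 \<in> \<real>)"
proof -
  define a b where "a = bessel_J \<nu> z0" and "b = bessel_J \<nu> (of_real \<gamma> * z0)"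
  define a' b' where "a' = bessel_J_br_deriv z0 \<nu> z0" and "b' = bessel_J_br_deriv (of_real \<gamma> * z0) \<nu> (of_real \<gamma> * z0)"
  have \<nu>_nonneg: "\<nu> \<ge> 0" using two_\<nu> by simp
  have \<gamma>z0: "of_real \<gamma> * z0 \<noteq> 0" using \<open>\<gamma> > 0\<close> \<open>z0 \<noteq> 0\<close> by simp
  have "\<gamma>\<^sup>2 \<noteq> 1"
    using \<open>\<gamma> > 0\<close> \<open>\<gamma> \<noteq> 1\<close> by (simp add: power2_eq_1_iff)
  then have "1 - (of_real \<gamma>)\<^sup>2 \<noteq> (0 :: complex)"
    by (metis of_real_1 of_real_diff of_real_eq_0_iff of_real_power right_minus_eq)
  note F_derivs = F_br_higher_derivs[OF \<nu>_nonneg \<open>\<gamma> > 0\<close> \<open>z0 \<noteq> 0\<close> F0, folded bessel_J_def, folded a_def b_def a'_def b'_def]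
  have cross: "of_real \<gamma> * a * b' = b * a'"
    using F0 F_br_eq[OF \<nu>_nonneg \<open>\<gamma> > 0\<close>, of z0 z0] \<open>z0 \<noteq> 0\<close> by (simp add: a_def b_def a'_def b'_def bessel_J_def)
  have simple: "a = 0 \<Longrightarrow> a' \<noteq> 0" "b = 0 \<Longrightarrow> b' \<noteq> 0"
    using bessel_J_br_deriv_nonzero[OF two_\<nu>] \<open>z0 \<noteq> 0\<close> \<gamma>z0 by (auto simp: a_def b_def a'_def b'_def bessel_J_def)
  have "a = 0 \<longleftrightarrow> b = 0"
    using cross simple \<open>\<gamma> > 0\<close> by auto
  then consider "a \<noteq> 0" "b \<noteq> 0" | "a = 0" "b = 0" "a' \<noteq> 0" "b' \<noteq> 0"
    using simple by blast
  then show ?thesis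
  proof cases
    case 1
    then show ?thesis
      unfolding zero_mult_1_iff zero_mult_3_iff
      using F0 F_derivs(1) \<open>1 - (of_real \<gamma>)\<^sup>2 \<noteq> 0\<close> by (simp add: a_def b_def)
  next
    case 2
    then show ?thesis
      unfolding zero_mult_1_iff zero_mult_3_iff
      using F0 F_derivs \<open>1 - (of_real \<gamma>)\<^sup>2 \<noteq> 0\<close> \<open>\<gamma> > 0\<close> bessel_J_zero_real[OF two_\<nu>, of z0]
      by (simp add: a_def b_def)
  qed
qed

theorem mainTheorem11:
  fixes \<gamma> :: real and l n :: nat and z0 :: complex
  assumes "\<gamma> > 0" and "\<gamma> \<noteq> 1" and "n \<ge> 2" and "z0 \<noteq> 0"
    and "F_br z0 \<gamma> (real l + real n / 2 - 1) z0 = 0"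
  shows "(zero_mult (F_br z0 \<gamma> (real l + real n / 2 - 1)) z0 1
          \<or> zero_mult (F_br z0 \<gamma> (real l + real n / 2 - 1)) z0 3)
       \<and> (zero_mult (F_br z0 \<gamma> (real l + real n / 2 - 1)) z0 3 \<longleftrightarrow>
           bessel_J (real l + real n / 2 - 1) z0 = 0
           \<and> bessel_J (real l + real n / 2 - 1) (of_real \<gamma> * z0) = 0)
       \<and> (zero_mult (F_br z0 \<gamma> (real l + real n / 2 - 1)) z0 3 \<longrightarrow> z0 \<in> \<real>)"
proof (rule zero_mult_F_br)
  show "2 * (real l + real n / 2 - 1) = real (2 * l + n - 2)"
    using \<open>n \<ge> 2\<close> by (simp add: of_nat_diff)
qed (use assms in auto)

end
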